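(* Let $(X,T)$ be a topological dynamical system and $\mathscr U$ an open cover of $X$. Let $\lambda_c$ be a symmetric probability measure on $[0,1]$ and let $c_S^n=\int_{[0,1]}x^{|S|}(1-x)^{n-|S|}\lambda_c(dx)$ for $S\subset n^*$. Define $b_n=\sum_{S\subset n^*}c_S^n\log N(\mathscr U_S)$. Then $b_{n+m}\le b_n+b_m$ for all $n,m\in\mathbb N$.
   Context: $(X,T)$: compact Hausdorff space with continuous map. $n^*=\{0,\dots,n-1\}$; $\mathscr U_S=\bigvee_{i\in S}T^{-i}\mathscr U$ (with $\mathscr U_\emptyset=\{X\}$); $N(\cdot)$ minimal cardinality of a subcover. A probability measure $\lambda$ on $[0,1]$ is symmetric if $\int f(x)\lambda(dx)=\int f(1-x)\lambda(dx)$ for all bounded measurable $f$. *)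

theory Defs
  imports "HOL-Probability.Probability"
begin

text \<open>Join cover U_S = join over i in S of T^{-i} U; for S = {} this is {UNIV}.\<close>
definition join_cover :: "('a \<Rightarrow> 'a) \<Rightarrow> 'a set set \<Rightarrow> nat set \<Rightarrow> 'a set set" where
  "join_cover T U S = {(\<Inter>i\<in>S. (T ^^ i) -` (V i)) | V. \<forall>i\<in>S. V i \<in> U}"

definition N_cov :: "'a set set \<Rightarrow> nat" where
  "N_cov C = (LEAST k. \<exists>F. F \<subseteq> C \<and> finite F \<and> card F = k \<and> \<Union>F = UNIV)"

text \<open>Symmetric probability measure on [0,1], represented as a Borel probability
measure on the reals concentrated on [0,1].\<close>
definition symmetric_prob_01 :: "real measure \<Rightarrow> bool" where
  "symmetric_prob_01 lam \<longleftrightarrow> prob_space lam \<and> sets lam = sets borel \<and>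
     emeasure lam {0..1} = 1 \<and>
     (\<forall>f :: real \<Rightarrow> real. f \<in> borel_measurable borel \<longrightarrow> bounded (range f) \<longrightarrow>
        (\<integral>x. f x \<partial>lam) = (\<integral>x. f (1 - x) \<partial>lam))"

definition c_coef :: "real measure \<Rightarrow> nat \<Rightarrow> nat set \<Rightarrow> real" where
  "c_coef lam n S = (\<integral>x. x ^ card S * (1 - x) ^ (n - card S) \<partial>lam)"

definition b_seq :: "real measure \<Rightarrow> ('a \<Rightarrow> 'a) \<Rightarrow> 'a set set \<Rightarrow> nat \<Rightarrow> real" where
  "b_seq lam T U n = (\<Sum>S\<in>Pow {..<n}. c_coef lam n S * ln (real (N_cov (join_cover T U S))))"

end

theory Submission
  imports Defs
begin

text \<open>For \<open>S\<^sub>1 \<subseteq> n\<^sup>*\<close> and \<open>S\<^sub>2 \<subseteq> m\<^sup>*\<close>, intersecting members of \<open>\<U>\<^bsub>S\<^sub>1\<^esub>\<close> with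
  preimages under \<open>T\<^sup>n\<close> of members of \<open>\<U>\<^bsub>S\<^sub>2\<^esub>\<close> shows
  \<open>N(\<U>\<^bsub>S\<^sub>1 \<union> (S\<^sub>2+n)\<^esub>) \<le> N(\<U>\<^bsub>S\<^sub>1\<^esub>) N(\<U>\<^bsub>S\<^sub>2\<^esub>)\<close>, so \<open>L S = log N(\<U>\<^bsub>S\<^esub>)\<close> is
  subadditive along this splitting of \<open>(n+m)\<^sup>*\<close>. The weight \<open>x\<^bsup>|S|\<^esup>(1-x)\<^bsup>n-|S|\<^esup>\<close> is the
  probability that a random subset of \<open>n\<^sup>*\<close>, containing each point independently with
  probability \<open>x\<close>, equals \<open>S\<close>, and such a random subset of \<open>(n+m)\<^sup>*\<close> is the independent
  union of one of \<open>n\<^sup>*\<close> and a shifted one of \<open>m\<^sup>*\<close>. Hence for each fixed \<open>x\<close> the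
  expectation of \<open>L\<close> is subadditive in \<open>n\<close>, and integrating over \<open>x\<close> preserves this.\<close>

lemma join_cover_memE:
  assumes "c \<in> join_cover T U S"
  obtains V where "c = (\<Inter>i\<in>S. (T ^^ i) -` V i)" "\<forall>i\<in>S. V i \<in> U"
  using assms unfolding join_cover_def by blast

lemma join_cover_memI:
  assumes "\<forall>i\<in>S. V i \<in> U"
  shows "(\<Inter>i\<in>S. (T ^^ i) -` V i) \<in> join_cover T U S"
  using assms unfolding join_cover_def by blast

lemma join_cover_Int:
  assumes "S1 \<inter> S2 = {}" "a \<in> join_cover T U S1" "b \<in> join_cover T U S2"
  shows "a \<inter> b \<in> join_cover T U (S1 \<union> S2)"
proof -
  obtain V1 where a: "a = (\<Inter>i\<in>S1. (T ^^ i) -` V1 i)" and V1: "\<forall>i\<in>S1. V1 i \<in> U"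
    using assms(2) by (rule join_cover_memE)
  obtain V2 where b: "b = (\<Inter>i\<in>S2. (T ^^ i) -` V2 i)" and V2: "\<forall>i\<in>S2. V2 i \<in> U"
    using assms(3) by (rule join_cover_memE)
  define V where "V i = (if i \<in> S1 then V1 i else V2 i)" for i
  have "(\<Inter>i\<in>S1. (T ^^ i) -` V i) = a"
    unfolding a V_def by simp
  moreover have "(\<Inter>i\<in>S2. (T ^^ i) -` V i) = b"
    using assms(1) unfolding b V_def by (intro INF_cong) auto
  ultimately have "a \<inter> b = (\<Inter>i\<in>S1 \<union> S2. (T ^^ i) -` V i)"
    by (simp add: INT_Un)
  moreover have "\<forall>i\<in>S1 \<union> S2. V i \<in> U"
    using V1 V2 unfolding V_def by auto
  ultimately show ?thesis
    by (simp add: join_cover_memI)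
qed

lemma join_cover_vimage_funpow:
  assumes "c \<in> join_cover T U S"
  shows "(T ^^ n) -` c \<in> join_cover T U ((\<lambda>i. i + n) ` S)"
proof -
  obtain V where c: "c = (\<Inter>i\<in>S. (T ^^ i) -` V i)" and V: "\<forall>i\<in>S. V i \<in> U"
    using assms by (rule join_cover_memE)
  have "(T ^^ n) -` c = (\<Inter>j\<in>(\<lambda>i. i + n) ` S. (T ^^ j) -` V (j - n))"
    unfolding c by (auto simp: funpow_add)
  moreover have "\<forall>j\<in>(\<lambda>i. i + n) ` S. V (j - n) \<in> U"
    using V by auto
  ultimately show ?thesis
    by (metis join_cover_memI)
qed

lemma join_cover_finite_subcover:
  fixes T :: "'a::topological_space \<Rightarrow> 'a"
  assumes "compact (UNIV :: 'a set)" "continuous_on UNIV T"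
    and "\<forall>u\<in>U. open u" "\<Union>U = UNIV" "finite S"
  obtains F where "F \<subseteq> join_cover T U S" "finite F" "\<Union>F = UNIV"
proof -
  have cont: "continuous_on UNIV (T ^^ i)" for i
  proof (induction i)
    case (Suc i)
    have "continuous_on UNIV (T \<circ> (T ^^ i))"
      by (rule continuous_on_compose[OF Suc continuous_on_subset[OF assms(2)]]) simp
    then show ?case
      by simp
  qed simp
  have "open c" if c_mem: "c \<in> join_cover T U S" for c
  proof -
    obtain V where c: "c = (\<Inter>i\<in>S. (T ^^ i) -` V i)" and V: "\<forall>i\<in>S. V i \<in> U"
      using c_mem by (rule join_cover_memE)
    have open_slice: "open ((T ^^ i) -` V i)" if "i \<in> S" for i
      using V assms(3) that by (intro open_vimage cont) blast
    show ?thesis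
      unfolding c by (intro open_INT assms(5) ballI open_slice)
  qed
  moreover have "UNIV \<subseteq> \<Union>(join_cover T U S)"
  proof
    fix x :: 'a
    have "\<forall>i. \<exists>u. u \<in> U \<and> (T ^^ i) x \<in> u"
      using assms(4) by blast
    then obtain V where V: "\<And>i. V i \<in> U" "\<And>i. (T ^^ i) x \<in> V i"
      by metis
    then have "(\<Inter>i\<in>S. (T ^^ i) -` V i) \<in> join_cover T U S"
      by (simp add: join_cover_memI)
    moreover have "x \<in> (\<Inter>i\<in>S. (T ^^ i) -` V i)"
      using V(2) by blast
    ultimately show "x \<in> \<Union>(join_cover T U S)"
      by blast
  qed
  ultimately obtain F where "F \<subseteq> join_cover T U S" "finite F" "UNIV \<subseteq> \<Union>F"
    using compactE[OF assms(1)] by metis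
  then show ?thesis
    using that by blast
qed

lemma N_cov_attained:
  assumes "F \<subseteq> C" "finite F" "\<Union>F = UNIV"
  obtains G where "G \<subseteq> C" "finite G" "card G = N_cov C" "\<Union>G = UNIV"
proof -
  let ?P = "\<lambda>k. \<exists>F. F \<subseteq> C \<and> finite F \<and> card F = k \<and> \<Union>F = UNIV"
  have "?P (card F)"
    using assms by blast
  then have "?P (LEAST k. ?P k)"
    by (rule LeastI)
  then show ?thesis
    using that unfolding N_cov_def by blast
qed

lemma N_cov_le_card:
  assumes "F \<subseteq> C" "finite F" "\<Union>F = UNIV"
  shows "N_cov C \<le> card F"
  unfolding N_cov_def by (rule Least_le) (use assms in blast)

lemma N_cov_pos:
  assumes "F \<subseteq> C" "finite F" "\<Union>F = UNIV"
  shows "0 < N_cov C"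
proof -
  obtain G where "G \<subseteq> C" "finite G" "card G = N_cov C" "\<Union>G = UNIV"
    using assms by (rule N_cov_attained)
  then show ?thesis
    by (metis Union_empty card_gt_0_iff empty_not_UNIV)
qed

lemma N_cov_Int_le:
  assumes "\<forall>a\<in>A. \<forall>b\<in>B. a \<inter> b \<in> C"
    and "FA \<subseteq> A" "finite FA" "\<Union>FA = UNIV"
    and "FB \<subseteq> B" "finite FB" "\<Union>FB = UNIV"
  shows "N_cov C \<le> N_cov A * N_cov B"
proof -
  obtain GA where GA: "GA \<subseteq> A" "finite GA" "card GA = N_cov A" "\<Union>GA = UNIV"
    using assms(2-4) by (rule N_cov_attained)
  obtain GB where GB: "GB \<subseteq> B" "finite GB" "card GB = N_cov B" "\<Union>GB = UNIV"
    using assms(5-7) by (rule N_cov_attained)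
  let ?G = "(\<lambda>(a, b). a \<inter> b) ` (GA \<times> GB)"
  have "?G \<subseteq> C"
    using assms(1) GA(1) GB(1) by auto
  moreover have "\<Union>?G = UNIV"
  proof -
    have "x \<in> \<Union>?G" for x
      using GA(4) GB(4) by blast
    then show ?thesis by blast
  qed
  ultimately have "N_cov C \<le> card ?G"
    using GA(2) GB(2) by (intro N_cov_le_card) auto
  also have "\<dots> \<le> card GA * card GB"
    using card_image_le[of "GA \<times> GB" "\<lambda>(a, b). a \<inter> b"] GA(2) GB(2)
    by (simp add: card_cartesian_product)
  finally show ?thesis
    using GA(3) GB(3) by simp
qed

lemma N_cov_vimage_le:
  assumes "\<forall>c\<in>C. f -` c \<in> D" and "F \<subseteq> C" "finite F" "\<Union>F = UNIV"
  shows "N_cov D \<le> N_cov C"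
proof -
  obtain G where G: "G \<subseteq> C" "finite G" "card G = N_cov C" "\<Union>G = UNIV"
    using assms(2-4) by (rule N_cov_attained)
  have "N_cov D \<le> card ((\<lambda>c. f -` c) ` G)"
    using assms(1) G by (intro N_cov_le_card) (auto simp flip: vimage_Union)
  also have "\<dots> \<le> card G"
    using G(2) by (rule card_image_le)
  finally show ?thesis
    using G(3) by simp
qed

lemma ln_N_cov_join_cover_Un_shift:
  fixes T :: "'a::topological_space \<Rightarrow> 'a"
  assumes "compact (UNIV :: 'a set)" "continuous_on UNIV T"
    and "\<forall>u\<in>U. open u" "\<Union>U = UNIV"
    and "S1 \<subseteq> {..<n}" "finite S2"
  shows "ln (N_cov (join_cover T U (S1 \<union> (\<lambda>i. i + n) ` S2)))
    \<le> ln (N_cov (join_cover T U S1)) + ln (N_cov (join_cover T U S2))"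
proof -
  let ?N = "\<lambda>S. N_cov (join_cover T U S)"
  let ?S2' = "(\<lambda>i. i + n) ` S2"
  have fin: "finite S1" "finite ?S2'" "finite (S1 \<union> ?S2')"
    using assms(5,6) finite_subset by auto
  note subcover = join_cover_finite_subcover[OF assms(1-4)]
  obtain F1 where F1: "F1 \<subseteq> join_cover T U S1" "finite F1" "\<Union>F1 = UNIV"
    using subcover[OF fin(1)] by blast
  obtain F2 where F2: "F2 \<subseteq> join_cover T U S2" "finite F2" "\<Union>F2 = UNIV"
    using subcover[OF assms(6)] by blast
  obtain F2' where F2': "F2' \<subseteq> join_cover T U ?S2'" "finite F2'" "\<Union>F2' = UNIV"
    using subcover[OF fin(2)] by blast
  obtain F where F: "F \<subseteq> join_cover T U (S1 \<union> ?S2')" "finite F" "\<Union>F = UNIV"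
    using subcover[OF fin(3)] by blast
  have "S1 \<inter> ?S2' = {}"
    using assms(5) by auto
  then have "?N (S1 \<union> ?S2') \<le> ?N S1 * ?N ?S2'"
    using join_cover_Int F1 F2' by (intro N_cov_Int_le) blast+
  also have "\<dots> \<le> ?N S1 * ?N S2"
    using join_cover_vimage_funpow F2 by (intro mult_le_mono2 N_cov_vimage_le) blast+
  finally have "real (?N (S1 \<union> ?S2')) \<le> real (?N S1) * real (?N S2)"
    by (metis of_nat_mono of_nat_mult)
  moreover have "0 < ?N (S1 \<union> ?S2')" "0 < ?N S1" "0 < ?N S2"
    using F F1 F2 by (blast intro: N_cov_pos)+
  ultimately show ?thesis
    by (simp add: ln_mult flip: ln_le_cancel_iff)
qed

definition subset_weight :: "nat \<Rightarrow> real \<Rightarrow> nat set \<Rightarrow> real" where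
  "subset_weight k x S = x ^ card S * (1 - x) ^ (k - card S)"

lemma sum_Pow_lessThan_add:
  fixes n m :: nat
  shows "(\<Sum>S\<in>Pow {..<n + m}. h S)
    = (\<Sum>S1\<in>Pow {..<n}. \<Sum>S2\<in>Pow {..<m}. h (S1 \<union> (\<lambda>i. i + n) ` S2))"
proof -
  define join where "join = (\<lambda>(S1, S2). S1 \<union> (\<lambda>i. i + n) ` (S2 :: nat set))"
  define split where "split S = (S \<inter> {..<n}, (\<lambda>i. i - n) ` (S - {..<n}))" for S :: "nat set"
  have "bij_betw join (Pow {..<n} \<times> Pow {..<m}) (Pow {..<n + m})"
  proof (rule bij_betwI[where g = split])
    show "join \<in> Pow {..<n} \<times> Pow {..<m} \<rightarrow> Pow {..<n + m}"
      unfolding join_def by auto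
    show "split \<in> Pow {..<n + m} \<rightarrow> Pow {..<n} \<times> Pow {..<m}"
      unfolding split_def by auto
    show "split (join p) = p" if p_mem: "p \<in> Pow {..<n} \<times> Pow {..<m}" for p
    proof -
      obtain S1 S2 where p: "p = (S1, S2)" "S1 \<subseteq> {..<n}"
        using p_mem by (cases p) auto
      then have "(S1 \<union> (\<lambda>i. i + n) ` S2) - {..<n} = (\<lambda>i. i + n) ` S2"
        by auto
      then show ?thesis
        using p unfolding join_def split_def by (auto simp: image_image)
    qed
    show "join (split S) = S" for S
    proof -
      have "(\<lambda>i. i - n + n) ` (S - {..<n}) = S - {..<n}"
        by (rule image_cong_simp[THEN trans, of _ _ _ id]) auto
      then show ?thesis
        unfolding join_def split_def by (auto simp: image_image)
    qed
  qed
  then have "(\<Sum>S\<in>Pow {..<n + m}. h S) = (\<Sum>p\<in>Pow {..<n} \<times> Pow {..<m}. h (join p))"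
    by (simp add: sum.reindex_bij_betw)
  then show ?thesis
    unfolding join_def sum.cartesian_product by (simp add: prod.case_distrib)
qed

lemma subset_weight_Un_shift:
  assumes "S1 \<subseteq> {..<n}" "S2 \<subseteq> {..<m}"
  shows "subset_weight (n + m) x (S1 \<union> (\<lambda>i. i + n) ` S2) = subset_weight n x S1 * subset_weight m x S2"
proof -
  have "finite S1" "finite S2"
    using assms finite_subset by auto
  moreover have "card ((\<lambda>i. i + n) ` S2) = card S2"
    by (rule card_image) (simp add: inj_on_def)
  moreover have "S1 \<inter> (\<lambda>i. i + n) ` S2 = {}"
    using assms by auto
  ultimately have "card (S1 \<union> (\<lambda>i. i + n) ` S2) = card S1 + card S2"
    by (simp add: card_Un_disjoint)
  moreover have "card S1 \<le> n" "card S2 \<le> m"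
    using card_mono[OF _ assms(1)] card_mono[OF _ assms(2)] by simp_all
  then have "n + m - (card S1 + card S2) = (n - card S1) + (m - card S2)"
    by simp
  ultimately show ?thesis
    unfolding subset_weight_def by (simp add: power_add algebra_simps)
qed

lemma sum_subset_weight: "(\<Sum>S\<in>Pow {..<k}. subset_weight k x S) = 1"
proof (induction k)
  case 0
  then show ?case by (simp add: subset_weight_def)
next
  case (Suc k)
  have "Pow {..<1 :: nat} = {{}, {0}}"
    by (auto simp: lessThan_Suc)
  then have one: "(\<Sum>S\<in>Pow {..<1}. subset_weight 1 x S) = 1"
    by (simp add: subset_weight_def)
  have "(\<Sum>S\<in>Pow {..<k + 1}. subset_weight (k + 1) x S)
      = (\<Sum>S1\<in>Pow {..<k}. \<Sum>S2\<in>Pow {..<1}. subset_weight k x S1 * subset_weight 1 x S2)"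
    unfolding sum_Pow_lessThan_add by (intro sum.cong refl subset_weight_Un_shift) auto
  also have "\<dots> = 1"
    using Suc one by (simp flip: sum_distrib_left)
  finally show ?case by simp
qed

lemma subset_weight_nonneg: "0 \<le> x \<Longrightarrow> x \<le> 1 \<Longrightarrow> 0 \<le> subset_weight k x S"
  unfolding subset_weight_def by simp

lemma weighted_sum_subadditive:
  fixes L :: "nat set \<Rightarrow> real"
  assumes "0 \<le> x" "x \<le> 1"
    and L: "\<And>S1 S2. S1 \<subseteq> {..<n} \<Longrightarrow> S2 \<subseteq> {..<m} \<Longrightarrow> L (S1 \<union> (\<lambda>i. i + n) ` S2) \<le> L S1 + L S2"
  shows "(\<Sum>S\<in>Pow {..<n + m}. subset_weight (n + m) x S * L S)
    \<le> (\<Sum>S\<in>Pow {..<n}. subset_weight n x S * L S) + (\<Sum>S\<in>Pow {..<m}. subset_weight m x S * L S)"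
proof -
  let ?w = "subset_weight"
  have "(\<Sum>S\<in>Pow {..<n + m}. ?w (n + m) x S * L S)
      = (\<Sum>S1\<in>Pow {..<n}. \<Sum>S2\<in>Pow {..<m}. (?w n x S1 * ?w m x S2) * L (S1 \<union> (\<lambda>i. i + n) ` S2))"
    unfolding sum_Pow_lessThan_add by (intro sum.cong refl) (simp add: subset_weight_Un_shift)
  also have "\<dots> \<le> (\<Sum>S1\<in>Pow {..<n}. \<Sum>S2\<in>Pow {..<m}. (?w n x S1 * ?w m x S2) * (L S1 + L S2))"
    using assms(1,2) by (intro sum_mono mult_left_mono L) (auto intro!: mult_nonneg_nonneg subset_weight_nonneg)
  also have "\<dots> = (\<Sum>S1\<in>Pow {..<n}. \<Sum>S2\<in>Pow {..<m}. (?w n x S1 * L S1) * ?w m x S2)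
      + (\<Sum>S1\<in>Pow {..<n}. \<Sum>S2\<in>Pow {..<m}. ?w n x S1 * (?w m x S2 * L S2))"
    by (simp add: sum.distrib[symmetric] algebra_simps)
  also have "\<dots> = (\<Sum>S\<in>Pow {..<n}. ?w n x S * L S) + (\<Sum>S\<in>Pow {..<m}. ?w m x S * L S)"
    by (simp add: sum_distrib_left[symmetric] sum_distrib_right[symmetric] sum_subset_weight)
  finally show ?thesis .
qed

lemma integrable_subset_weight:
  assumes "prob_space lam" "sets lam = sets borel" "emeasure lam {0..1} = 1"
  shows "integrable lam (\<lambda>x. subset_weight k x S)"
proof -
  interpret prob_space lam by (rule assms(1))
  have "AE x in lam. x \<in> {0..1}"
    using assms(3) by (intro AE_prob_1) (simp add: measure_def)
  then have "AE x in lam. norm (subset_weight k x S) \<le> 1"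
    by eventually_elim (auto simp: subset_weight_def abs_mult power_abs intro!: mult_le_one power_le_one)
  moreover have "(\<lambda>x. subset_weight k x S) \<in> borel_measurable lam"
    using assms(2) unfolding subset_weight_def by measurable
  ultimately show ?thesis
    by (intro integrable_const_bound)
qed

lemma mixture_weighted_sum_subadditive:
  fixes L :: "nat set \<Rightarrow> real"
  assumes "prob_space lam" "sets lam = sets borel" "emeasure lam {0..1} = 1"
    and "\<And>S1 S2. S1 \<subseteq> {..<n} \<Longrightarrow> S2 \<subseteq> {..<m} \<Longrightarrow> L (S1 \<union> (\<lambda>i. i + n) ` S2) \<le> L S1 + L S2"
  shows "(\<Sum>S\<in>Pow {..<n + m}. c_coef lam (n + m) S * L S)
    \<le> (\<Sum>S\<in>Pow {..<n}. c_coef lam n S * L S) + (\<Sum>S\<in>Pow {..<m}. c_coef lam m S * L S)"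
proof -
  interpret prob_space lam by (rule assms(1))
  define g where "g k x = (\<Sum>S\<in>Pow {..<k}. subset_weight k x S * L S)" for k x
  have int: "integrable lam (\<lambda>x. subset_weight k x S * L S)" for k S
    using integrable_subset_weight[OF assms(1-3)] by simp
  then have int_g: "integrable lam (g k)" for k
    unfolding g_def by simp
  have sum_eq: "(\<Sum>S\<in>Pow {..<k}. c_coef lam k S * L S) = (\<integral>x. g k x \<partial>lam)" for k
    unfolding g_def c_coef_def subset_weight_def[symmetric] using int by simp
  have "AE x in lam. x \<in> {0..1}"
    using assms(3) by (intro AE_prob_1) (simp add: measure_def)
  then have "AE x in lam. g (n + m) x \<le> g n x + g m x"
    unfolding g_def by eventually_elim (auto intro!: weighted_sum_subadditive assms(4))
  then have "(\<integral>x. g (n + m) x \<partial>lam) \<le> (\<integral>x. g n x + g m x \<partial>lam)"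
    using int_g by (intro integral_mono_AE) auto
  also have "\<dots> = (\<integral>x. g n x \<partial>lam) + (\<integral>x. g m x \<partial>lam)"
    by (rule Bochner_Integration.integral_add[OF int_g int_g])
  finally show ?thesis
    unfolding sum_eq .
qed

theorem theorem2p8:
  fixes T :: "'a::t2_space \<Rightarrow> 'a" and U :: "'a set set" and lam :: "real measure"
  assumes "compact (UNIV :: 'a set)"
    and "continuous_on UNIV T"
    and "\<forall>u\<in>U. open u" and "\<Union>U = UNIV"
    and "symmetric_prob_01 lam"
  shows "\<forall>n m. b_seq lam T U (n + m) \<le> b_seq lam T U n + b_seq lam T U m"
proof (intro allI)
  fix n m :: nat
  have "prob_space lam" "sets lam = sets borel" "emeasure lam {0..1} = 1"
    using assms(5) unfolding symmetric_prob_01_def by auto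
  moreover have "ln (N_cov (join_cover T U (S1 \<union> (\<lambda>i. i + n) ` S2)))
      \<le> ln (N_cov (join_cover T U S1)) + ln (N_cov (join_cover T U S2))"
    if "S1 \<subseteq> {..<n}" "S2 \<subseteq> {..<m}" for S1 S2
    using that finite_subset by (intro ln_N_cov_join_cover_Un_shift assms(1-4)) auto
  ultimately show "b_seq lam T U (n + m) \<le> b_seq lam T U n + b_seq lam T U m"
    unfolding b_seq_def by (rule mixture_weighted_sum_subadditive)
qed

end
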